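(* Let $f_{\mathbf{U}}$ be a probability density on $\mathbb{R}^d$ (the reference) and $f_{\mathbf{X}_1},\dots,f_{\mathbf{X}_L}$ probability densities on $\mathbb{R}^d$. Let $\mathcal{Q}_1,\dots,\mathcal{Q}_L$ be diffeomorphisms of $\mathbb{R}^d$ and set $\mathcal{T}_\ell=\mathcal{Q}_1\circ\cdots\circ\mathcal{Q}_\ell$. Assume there are constants $\eta\in(0,1)$ and $\omega\in[0,1)$ such that (a) $D_{\mathrm H}(f_{\mathbf{X}_\ell},f_{\mathbf{X}_{\ell+1}})\le\eta$ for all $1\le\ell<L$; (b) $D_{\mathrm H}\big((\mathcal{Q}_{\ell+1})_\sharp f_{\mathbf{U}},\mathcal{T}_\ell^\sharp f_{\mathbf{X}_{\ell+1}}\big)\le\omega\,D_{\mathrm H}\big(f_{\mathbf{U}},\mathcal{T}_\ell^\sharp f_{\mathbf{X}_{\ell+1}}\big)$ for all $1\le\ell<L$; (c) $D_{\mathrm H}\big((\mathcal{Q}_1)_\sharp f_{\mathbf{U}},f_{\mathbf{X}_1}\big)\le\omega\eta$. Then $D_{\mathrm H}\big((\mathcal{T}_L)_\sharp f_{\mathbf{U}},f_{\mathbf{X}_L}\big)\le\frac{\omega}{1-\omega}\eta$.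
   Context: Hellinger distance between densities $f,h$ on $\mathbb{R}^d$: $D_{\mathrm H}(f,h)=\big(\tfrac12\int(\sqrt{f(\mathbf{x})}-\sqrt{h(\mathbf{x})})^2\,\mathrm{d}\mathbf{x}\big)^{1/2}$. For a diffeomorphism $\mathcal{S}$, the pushforward density is $\mathcal{S}_\sharp f(\mathbf{u})=f(\mathcal{S}^{-1}(\mathbf{u}))\,|\det\nabla\mathcal{S}^{-1}(\mathbf{u})|$ (the density of $\mathcal{S}(\mathbf{X})$ when $\mathbf{X}\sim f$) and the pullback density is $\mathcal{S}^\sharp f(\mathbf{x})=f(\mathcal{S}(\mathbf{x}))\,|\det\nabla\mathcal{S}(\mathbf{x})|$ (the density of $\mathcal{S}^{-1}(\mathbf{X})$). *)

theory Defs
  imports "HOL-Analysis.Analysis"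
begin

definition is_density :: "(real^'n \<Rightarrow> real) \<Rightarrow> bool" where
  "is_density f \<longleftrightarrow> f \<in> borel_measurable lborel \<and> (\<forall>x. 0 \<le> f x)
     \<and> integrable lborel f \<and> integral\<^sup>L lborel f = 1"

definition hellinger :: "(real^'n \<Rightarrow> real) \<Rightarrow> (real^'n \<Rightarrow> real) \<Rightarrow> real" where
  "hellinger f h = sqrt ((1/2) * integral\<^sup>L lborel (\<lambda>x. (sqrt (f x) - sqrt (h x))^2))"

definition jac_det :: "(real^'n \<Rightarrow> real^'n) \<Rightarrow> real^'n \<Rightarrow> real" where
  "jac_det S x = det (matrix (frechet_derivative S (at x)))"

definition diffeo :: "(real^'n \<Rightarrow> real^'n) \<Rightarrow> bool" where
  "diffeo S \<longleftrightarrow> bij S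
     \<and> (\<forall>x. S differentiable (at x))
     \<and> continuous_on UNIV (\<lambda>x. matrix (frechet_derivative S (at x)))
     \<and> (\<forall>y. inv S differentiable (at y))
     \<and> continuous_on UNIV (\<lambda>y. matrix (frechet_derivative (inv S) (at y)))"

definition pushfwd :: "(real^'n \<Rightarrow> real^'n) \<Rightarrow> (real^'n \<Rightarrow> real) \<Rightarrow> (real^'n \<Rightarrow> real)" where
  "pushfwd S f = (\<lambda>u. f (inv S u) * \<bar>jac_det (inv S) u\<bar>)"

definition pullback :: "(real^'n \<Rightarrow> real^'n) \<Rightarrow> (real^'n \<Rightarrow> real) \<Rightarrow> (real^'n \<Rightarrow> real)" where
  "pullback S f = (\<lambda>x. f (S x) * \<bar>jac_det S x\<bar>)"

primrec comp_upto :: "(nat \<Rightarrow> ('a \<Rightarrow> 'a)) \<Rightarrow> nat \<Rightarrow> ('a \<Rightarrow> 'a)" where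
  "comp_upto Q 0 = id"
| "comp_upto Q (Suc l) = comp_upto Q l \<circ> Q (Suc l)"

end

theory Submission
  imports Defs "HOL-Combinatorics.Permutations"
begin

text \<open>
  A diffeomorphism \<open>T\<close> changes variables in the Hellinger integral:
  \<open>D(T_# g, f) = D(g, T^# f)\<close>. With \<open>e_l = D((T_l)_# f_U, f_X_l)\<close> and \<open>T_(l+1) = T_l \<circ> Q_(l+1)\<close>,
  hypothesis (b) and the triangle inequality (\<open>D\<close> is, up to a factor, the \<open>L\<^sup>2\<close> distance of
  square roots) give
  \<open>e_(l+1) = D((Q_(l+1))_# f_U, T_l^# f_X_(l+1)) \<le> \<omega> D((T_l)_# f_U, f_X_(l+1)) \<le> \<omega> (e_l + \<eta>)\<close>.
  As \<open>e_1 \<le> \<omega>\<eta>\<close> and \<open>\<omega>\<eta> / (1 - \<omega>)\<close> is the fixed point of \<open>x \<mapsto> \<omega> (x + \<eta>)\<close>,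
  induction bounds every \<open>e_l\<close> by it.
\<close>

section \<open>Change of variables for nonnegative integrals\<close>

lemma nn_integral_le_if_has_integral_imp:
  fixes f g :: "'a::euclidean_space \<Rightarrow> real"
  assumes f: "f \<in> borel_measurable borel" "\<And>x. 0 \<le> f x"
    and g: "g \<in> borel_measurable borel" "\<And>x. 0 \<le> g x"
    and imp: "\<And>r. (g has_integral r) UNIV \<Longrightarrow> (f has_integral r) UNIV"
  shows "(\<integral>\<^sup>+x. f x \<partial>lborel) \<le> (\<integral>\<^sup>+x. g x \<partial>lborel)"
proof (cases "(\<integral>\<^sup>+x. g x \<partial>lborel) < \<infinity>")
  case True
  then obtain r where r: "(\<integral>\<^sup>+x. g x \<partial>lborel) = ennreal r" "0 \<le> r"
    by (cases "\<integral>\<^sup>+x. g x \<partial>lborel" rule: ennreal_cases) auto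
  then have "(g has_integral r) UNIV"
    using g by (intro nn_integral_has_integral) auto
  then have "(\<integral>\<^sup>+x. f x \<partial>lborel) = r"
    using f by (intro nn_integral_has_integral_lborel imp) auto
  with r show ?thesis by simp
qed (simp add: not_less top_unique)

lemma nn_integral_change_of_variables_invertible:
  fixes g :: "real^'m::{finite,wellorder} \<Rightarrow> real^'m::_" and h :: "real^'m::_ \<Rightarrow> real"
  assumes g: "\<And>x. (g has_derivative g' x) (at x)"
    and k: "\<And>y. (k has_derivative k' y) (at y)"
    and kg: "\<And>x. k (g x) = x" and gk: "\<And>y. g (k y) = y"
    and k'g': "\<And>y. k' y \<circ> g' (k y) = id"
    and h: "h \<in> borel_measurable borel" "\<And>y. 0 \<le> h y"
    and D: "(\<lambda>x. \<bar>det (matrix (g' x))\<bar> * h (g x)) \<in> borel_measurable borel"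
  shows "(\<integral>\<^sup>+y. h y \<partial>lborel) = (\<integral>\<^sup>+x. \<bar>det (matrix (g' x))\<bar> * h (g x) \<partial>lborel)"
proof -
  have "((\<lambda>x. \<bar>det (matrix (g' x))\<bar> * h (g x)) has_integral r) UNIV \<longleftrightarrow> (h has_integral r) UNIV"
    for r
    using g k kg gk k'g' h(2)
    by (intro cov_invertible_nonneg_eq[where h = k and h' = k' and S = UNIV and T = UNIV]) auto
  then show ?thesis
    using h D by (intro antisym nn_integral_le_if_has_integral_imp) auto
qed

section \<open>A well-ordered copy of a finite index type\<close>

text \<open>
  The change-of-variables theorems of \<open>HOL-Analysis\<close> require an index type of class
  \<open>wellorder\<close>; a finite index type is transported to this isomorphic copy, ordered via \<open>to_nat\<close>.
\<close>

typedef 'a wellordered = "UNIV :: 'a set" by auto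

lemma range_Rep_wellordered: "range Rep_wellordered = UNIV"
  using type_definition.Rep_range[OF type_definition_wellordered] .

lemma bij_Rep_wellordered: "bij Rep_wellordered"
  by (metis Rep_wellordered_inject bij_def inj_def range_Rep_wellordered)

lemma bij_Abs_wellordered: "bij Abs_wellordered"
  by (metis Abs_wellordered_inverse Rep_wellordered_inverse UNIV_I bij_betw_byWitness subset_UNIV)

instantiation wellordered :: (finite) linorder
begin

definition less_eq_wellordered :: "'a wellordered \<Rightarrow> 'a wellordered \<Rightarrow> bool" where
  "less_eq_wellordered x y \<longleftrightarrow> to_nat (Rep_wellordered x) \<le> to_nat (Rep_wellordered y)"

definition less_wellordered :: "'a wellordered \<Rightarrow> 'a wellordered \<Rightarrow> bool" where
  "less_wellordered x y \<longleftrightarrow> to_nat (Rep_wellordered x) < to_nat (Rep_wellordered y)"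

instance
  by standard
    (auto simp: less_eq_wellordered_def less_wellordered_def Rep_wellordered_inject[symmetric])

end

instance wellordered :: (finite) finite
proof
  show "finite (UNIV :: 'a wellordered set)"
    using bij_Abs_wellordered by (metis bij_is_surj finite finite_imageI)
qed

instance wellordered :: (finite) wellorder
proof
  fix P :: "'a wellordered \<Rightarrow> bool" and a
  assume step: "\<And>x. (\<And>y. y < x \<Longrightarrow> P y) \<Longrightarrow> P x"
  show "P a"
    by (induct "to_nat (Rep_wellordered a)" arbitrary: a rule: less_induct)
      (rule step, auto simp: less_wellordered_def)
qed

lemma permutes_conjugate:
  fixes p :: "'a::finite \<Rightarrow> 'a" and f :: "'a \<Rightarrow> 'b"
  assumes p: "p permutes UNIV" and f: "bij f" and g: "\<And>x. g (f x) = x"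
  shows "(\<lambda>y. f (p (g y))) permutes UNIV" "sign (\<lambda>y. f (p (g y))) = sign p"
proof -
  have "permutes_bij_finite p UNIV UNIV f g"
    using p f g by unfold_locales auto
  from permutes_bij.permutes_p'[OF permutes_bij_finite.axioms(1)[OF this]]
       permutes_bij_finite.sign_p'[OF this]
  show "(\<lambda>y. f (p (g y))) permutes UNIV" "sign (\<lambda>y. f (p (g y))) = sign p"
    by simp_all
qed

definition to_wellordered :: "'a^'n \<Rightarrow> 'a^'n wellordered" where
  "to_wellordered x = (\<chi> i. x $ Rep_wellordered i)"

definition of_wellordered :: "'a^'n wellordered \<Rightarrow> 'a^'n" where
  "of_wellordered y = (\<chi> j. y $ Abs_wellordered j)"

lemma to_of_wellordered [simp]: "to_wellordered (of_wellordered y) = y"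
  by (simp add: to_wellordered_def of_wellordered_def Rep_wellordered_inverse vec_eq_iff)

lemma of_to_wellordered [simp]: "of_wellordered (to_wellordered x) = x"
  by (simp add: to_wellordered_def of_wellordered_def Abs_wellordered_inverse vec_eq_iff)

lemma linear_to_wellordered: "linear to_wellordered"
  by (auto simp: to_wellordered_def linear_iff vec_eq_iff)

lemma linear_of_wellordered: "linear of_wellordered"
  by (auto simp: of_wellordered_def linear_iff vec_eq_iff)

lemma det_reindex_wellordered:
  fixes A :: "'a::comm_ring_1^'n^'n"
  shows "det (\<chi> i j. A $ Rep_wellordered i $ Rep_wellordered j) = det A"
  unfolding det_def
proof (rule sum.reindex_bij_witness
    [where j = "\<lambda>q x. Rep_wellordered (q (Abs_wellordered x))"
       and i = "\<lambda>p x. Abs_wellordered (p (Rep_wellordered x))"])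
  fix q :: "'n wellordered \<Rightarrow> 'n wellordered"
  assume "q \<in> {q. q permutes UNIV}"
  then have q: "q permutes UNIV" by simp
  note conj = permutes_conjugate[OF q bij_Rep_wellordered Rep_wellordered_inverse]
  show "(\<lambda>x. Rep_wellordered (q (Abs_wellordered x))) \<in> {p. p permutes UNIV}"
    using conj(1) by simp
  show "(\<lambda>x. Abs_wellordered (Rep_wellordered (q (Abs_wellordered (Rep_wellordered x))))) = q"
    by (simp add: Rep_wellordered_inverse)
  have "(\<Prod>i\<in>UNIV. A $ i $ Rep_wellordered (q (Abs_wellordered i)))
      = (\<Prod>i\<in>UNIV. A $ Rep_wellordered i $ Rep_wellordered (q i))"
    by (rule prod.reindex_bij_witness[where i = Rep_wellordered and j = Abs_wellordered])
      (simp_all add: Rep_wellordered_inverse Abs_wellordered_inverse)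
  then show "of_int (sign (\<lambda>x. Rep_wellordered (q (Abs_wellordered x))))
        * (\<Prod>i\<in>UNIV. A $ i $ Rep_wellordered (q (Abs_wellordered i)))
      = of_int (sign q) * (\<Prod>i\<in>UNIV. (\<chi> i j. A $ Rep_wellordered i $ Rep_wellordered j) $ i $ q i)"
    using conj(2) by simp
next
  fix p :: "'n \<Rightarrow> 'n"
  assume "p \<in> {p. p permutes UNIV}"
  then have p: "p permutes UNIV" by simp
  show "(\<lambda>x. Abs_wellordered (p (Rep_wellordered x))) \<in> {q. q permutes UNIV}"
    using permutes_conjugate(1)[OF p bij_Abs_wellordered] by (simp add: Abs_wellordered_inverse)
  show "(\<lambda>x. Rep_wellordered (Abs_wellordered (p (Rep_wellordered (Abs_wellordered x))))) = p"
    by (simp add: Abs_wellordered_inverse)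
qed

lemma all_Rep_wellordered: "(\<forall>i. P (Rep_wellordered i)) \<longleftrightarrow> (\<forall>j. P j)"
  by (metis Abs_wellordered_inverse UNIV_I)

lemma prod_Rep_wellordered:
  "(\<Prod>i\<in>UNIV. f (Rep_wellordered i)) = (\<Prod>j\<in>UNIV. f j :: 'b::comm_monoid_mult)"
  by (rule prod.reindex_bij_witness[where i = Abs_wellordered and j = Rep_wellordered])
    (simp_all add: Rep_wellordered_inverse Abs_wellordered_inverse)

lemma prod_Basis_cart: "(\<Prod>b\<in>Basis. (u - l) \<bullet> b) = (\<Prod>i\<in>UNIV. u $ i - l $ i :: real)"
  by (simp add: Basis_vec_def cart_eq_inner_axis axis_eq_axis prod.UNION_disjoint inner_diff_left)

lemma Basis_le_cart: "(\<forall>b\<in>Basis. l \<bullet> b \<le> u \<bullet> b) \<longleftrightarrow> (\<forall>i. l $ i \<le> (u $ i :: real))"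
  by (auto simp: Basis_vec_def cart_eq_inner_axis[symmetric])

lemma vimage_of_wellordered_box:
  "of_wellordered -` box l u = box (to_wellordered l) (to_wellordered (u :: real^'n))"
proof (intro set_eqI)
  fix x
  have "x \<in> of_wellordered -` box l u
      \<longleftrightarrow> (\<forall>j. l $ j < x $ Abs_wellordered j \<and> x $ Abs_wellordered j < u $ j)"
    by (simp add: mem_box_cart of_wellordered_def)
  also have "\<dots> \<longleftrightarrow> (\<forall>i. l $ Rep_wellordered i < x $ i \<and> x $ i < u $ Rep_wellordered i)"
    using all_Rep_wellordered[of "\<lambda>j. l $ j < x $ Abs_wellordered j \<and> x $ Abs_wellordered j < u $ j"]
    by (simp add: Rep_wellordered_inverse)
  also have "\<dots> \<longleftrightarrow> x \<in> box (to_wellordered l) (to_wellordered u)"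
    by (simp add: mem_box_cart to_wellordered_def)
  finally show "x \<in> of_wellordered -` box l u \<longleftrightarrow> x \<in> box (to_wellordered l) (to_wellordered u)" .
qed

lemma borel_measurable_of_wellordered [measurable]:
  "(of_wellordered :: real^'n wellordered \<Rightarrow> real^'n) \<in> borel_measurable borel"
  by (intro borel_measurable_continuous_onI linear_continuous_on)
    (simp add: linear_conv_bounded_linear[symmetric] linear_of_wellordered)

lemma lborel_distr_of_wellordered: "distr lborel borel of_wellordered = (lborel :: (real^'n) measure)"
proof (rule lborel_eqI[symmetric])
  fix l u :: "real^'n"
  assume "\<And>b. b \<in> Basis \<Longrightarrow> l \<bullet> b \<le> u \<bullet> b"
  then have "\<forall>i. l $ i \<le> u $ i"
    using Basis_le_cart by blast
  then have "\<forall>b\<in>Basis. to_wellordered l \<bullet> b \<le> to_wellordered u \<bullet> b"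
    by (simp add: Basis_le_cart to_wellordered_def)
  then have "emeasure (distr lborel borel of_wellordered) (box l u)
      = (\<Prod>i\<in>UNIV. u $ Rep_wellordered i - l $ Rep_wellordered i)"
    by (simp add: emeasure_distr vimage_of_wellordered_box emeasure_lborel_box_eq
        prod_Basis_cart to_wellordered_def)
  then show "emeasure (distr lborel borel of_wellordered) (box l u) = (\<Prod>b\<in>Basis. (u - l) \<bullet> b)"
    by (simp add: prod_Rep_wellordered[of "\<lambda>i. u $ i - l $ i"] prod_Basis_cart)
qed simp

lemma nn_integral_of_wellordered:
  fixes f :: "real^'n \<Rightarrow> ennreal"
  assumes [measurable]: "f \<in> borel_measurable borel"
  shows "(\<integral>\<^sup>+x. f x \<partial>lborel) = (\<integral>\<^sup>+y. f (of_wellordered y) \<partial>lborel)"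
  by (subst lborel_distr_of_wellordered[symmetric]) (simp add: nn_integral_distr)

lemma of_wellordered_axis: "of_wellordered (axis j 1) = axis (Rep_wellordered j) (1::real)"
  by (auto simp: of_wellordered_def vec_eq_iff axis_def Abs_wellordered_inverse Rep_wellordered_inverse)

lemma matrix_conjugate_wellordered:
  fixes f :: "real^'n \<Rightarrow> real^'n"
  shows "matrix (\<lambda>v. to_wellordered (f (of_wellordered v)))
     = (\<chi> i j. matrix f $ Rep_wellordered i $ Rep_wellordered j)"
  by (simp add: matrix_def vec_eq_iff to_wellordered_def of_wellordered_axis)

lemma has_derivative_conjugate_wellordered:
  fixes f :: "real^'n \<Rightarrow> real^'n"
  assumes "(f has_derivative f') (at (of_wellordered y))"
  shows "((\<lambda>y. to_wellordered (f (of_wellordered y))) has_derivative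
      (\<lambda>v. to_wellordered (f' (of_wellordered v)))) (at y)"
proof -
  have "(to_wellordered \<circ> f \<circ> of_wellordered has_derivative to_wellordered \<circ> f' \<circ> of_wellordered) (at y)"
    using linear_of_wellordered linear_to_wellordered assms
    by (intro diff_chain_at linear_imp_has_derivative)
  then show ?thesis by (simp add: o_def)
qed

section \<open>Diffeomorphisms\<close>

lemma continuous_on_det:
  fixes M :: "'a::topological_space \<Rightarrow> real^'n^'n"
  assumes "continuous_on S M"
  shows "continuous_on S (\<lambda>x. det (M x))"
  unfolding det_def by (intro continuous_intros assms)

lemma diffeo_has_derivative: "diffeo T \<Longrightarrow> (T has_derivative frechet_derivative T (at x)) (at x)"
  by (simp add: diffeo_def frechet_derivative_works[symmetric])

lemma diffeo_inv_has_derivative: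
  "diffeo T \<Longrightarrow> (inv T has_derivative frechet_derivative (inv T) (at y)) (at y)"
  by (simp add: diffeo_def frechet_derivative_works[symmetric])

lemma diffeo_inv_f [simp]: "diffeo T \<Longrightarrow> inv T (T x) = x"
  by (simp add: diffeo_def bij_is_inj)

lemma diffeo_f_inv [simp]: "diffeo T \<Longrightarrow> T (inv T y) = y"
  by (simp add: diffeo_def bij_is_surj surj_f_inv_f)

lemma frechet_derivative_inv_comp:
  assumes "diffeo T"
  shows "frechet_derivative (inv T) (at (T x)) \<circ> frechet_derivative T (at x) = id"
proof -
  have "(inv T \<circ> T has_derivative frechet_derivative (inv T) (at (T x)) \<circ> frechet_derivative T (at x))
      (at x)"
    using assms by (intro diff_chain_at diffeo_has_derivative diffeo_inv_has_derivative)
  moreover have "inv T \<circ> T = id"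
    using assms by (simp add: fun_eq_iff)
  ultimately show ?thesis
    using has_derivative_id has_derivative_unique by metis
qed

lemma jac_det_inv_mult:
  assumes "diffeo T"
  shows "jac_det (inv T) (T x) * jac_det T x = 1"
proof -
  have "linear (frechet_derivative T (at x))" "linear (frechet_derivative (inv T) (at (T x)))"
    using assms by (auto intro: has_derivative_linear diffeo_has_derivative diffeo_inv_has_derivative)
  then have "jac_det (inv T) (T x) * jac_det T x
      = det (matrix (frechet_derivative (inv T) (at (T x)) \<circ> frechet_derivative T (at x)))"
    unfolding jac_det_def by (simp add: matrix_compose det_mul)
  also have "\<dots> = 1"
    by (simp add: frechet_derivative_inv_comp[OF assms])
  finally show ?thesis .
qed

lemma diffeo_continuous_on:
  assumes "diffeo T"
  shows "continuous_on UNIV T" "continuous_on UNIV (inv T)"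
  using assms unfolding diffeo_def
  by (meson differentiable_imp_continuous_within continuous_at_imp_continuous_on)+

lemma borel_measurable_diffeo [measurable]:
  assumes "diffeo T"
  shows "T \<in> borel_measurable borel" "inv T \<in> borel_measurable borel"
  using diffeo_continuous_on[OF assms] by (auto intro: borel_measurable_continuous_onI)

lemma borel_measurable_jac_det [measurable]:
  assumes "diffeo T"
  shows "jac_det T \<in> borel_measurable borel" "jac_det (inv T) \<in> borel_measurable borel"
  using assms unfolding diffeo_def jac_det_def
  by (auto intro!: borel_measurable_continuous_onI continuous_on_det)

lemma nn_integral_change_of_variables_diffeo:
  fixes T :: "real^'n \<Rightarrow> real^'n" and h :: "real^'n \<Rightarrow> real"
  assumes T: "diffeo T" and h [measurable]: "h \<in> borel_measurable borel" and "\<And>y. 0 \<le> h y"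
  shows "(\<integral>\<^sup>+y. h y \<partial>lborel) = (\<integral>\<^sup>+x. \<bar>jac_det T x\<bar> * h (T x) \<partial>lborel)"
proof -
  define DT where "DT x = frechet_derivative T (at x)" for x
  define DI where "DI y = frechet_derivative (inv T) (at y)" for y
  define g where "g y = to_wellordered (T (of_wellordered y))" for y
  define g' where "g' y v = to_wellordered (DT (of_wellordered y) (of_wellordered v))" for y v
  define k where "k y = to_wellordered (inv T (of_wellordered y))" for y
  define k' where "k' y v = to_wellordered (DI (of_wellordered y) (of_wellordered v))" for y v
  note [measurable] = borel_measurable_diffeo[OF T] borel_measurable_jac_det[OF T]
  have g: "(g has_derivative g' y) (at y)" for y
    unfolding g_def[abs_def] g'_def[abs_def] DT_def
    by (intro has_derivative_conjugate_wellordered diffeo_has_derivative T)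
  have k: "(k has_derivative k' y) (at y)" for y
    unfolding k_def[abs_def] k'_def[abs_def] DI_def
    by (intro has_derivative_conjugate_wellordered diffeo_inv_has_derivative T)
  have k'g': "k' y \<circ> g' (k y) = id" for y
    using fun_cong[OF frechet_derivative_inv_comp[OF T, of "inv T (of_wellordered y)"]] T
    by (simp add: fun_eq_iff k'_def g'_def k_def DI_def DT_def)
  have jac_g: "\<bar>det (matrix (g' y))\<bar> * h (of_wellordered (g y))
      = \<bar>jac_det T (of_wellordered y)\<bar> * h (T (of_wellordered y))" for y
    by (simp add: g'_def[abs_def] g_def matrix_conjugate_wellordered det_reindex_wellordered
        jac_det_def DT_def)
  have "(\<integral>\<^sup>+y. h y \<partial>lborel) = (\<integral>\<^sup>+y. h (of_wellordered y) \<partial>lborel)"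
    by (rule nn_integral_of_wellordered) measurable
  also have "\<dots> = (\<integral>\<^sup>+y. \<bar>det (matrix (g' y))\<bar> * h (of_wellordered (g y)) \<partial>lborel)"
  proof (rule nn_integral_change_of_variables_invertible[OF g k _ _ k'g'])
    show "(\<lambda>y. \<bar>det (matrix (g' y))\<bar> * h (of_wellordered (g y))) \<in> borel_measurable borel"
      unfolding jac_g by measurable
  qed (use T assms(3) in \<open>auto simp: g_def k_def\<close>)
  also have "\<dots> = (\<integral>\<^sup>+x. \<bar>jac_det T x\<bar> * h (T x) \<partial>lborel)"
    unfolding jac_g by (rule nn_integral_of_wellordered[symmetric]) measurable
  finally show ?thesis .
qed

lemma diffeo_id: "diffeo (id :: real^'n \<Rightarrow> real^'n)"
  unfolding diffeo_def by (auto simp: inv_id intro: differentiableI has_derivative_id)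

lemma matrix_frechet_derivative_comp:
  fixes A B :: "real^'n \<Rightarrow> real^'n"
  assumes "\<And>x. A differentiable at x" "\<And>x. B differentiable at x"
  shows "matrix (frechet_derivative (A \<circ> B) (at x))
       = matrix (frechet_derivative A (at (B x))) ** matrix (frechet_derivative B (at x))"
  using assms
  by (simp add: frechet_derivative_compose matrix_compose linear_frechet_derivative)

lemma jac_det_comp:
  fixes A B :: "real^'n \<Rightarrow> real^'n"
  assumes "\<And>x. A differentiable at x" "\<And>x. B differentiable at x"
  shows "jac_det (A \<circ> B) x = jac_det A (B x) * jac_det B x"
  by (simp add: jac_det_def matrix_frechet_derivative_comp[OF assms] det_mul)

lemma continuous_on_matrix_frechet_derivative_comp:
  fixes A B :: "real^'n \<Rightarrow> real^'n"
  assumes "\<And>x. A differentiable at x" "\<And>x. B differentiable at x" "continuous_on UNIV B"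
    and "continuous_on UNIV (\<lambda>x. matrix (frechet_derivative A (at x)))"
    and "continuous_on UNIV (\<lambda>x. matrix (frechet_derivative B (at x)))"
  shows "continuous_on UNIV (\<lambda>x. matrix (frechet_derivative (A \<circ> B) (at x)))"
  unfolding matrix_frechet_derivative_comp[OF assms(1,2)] matrix_matrix_mult_def
  using continuous_on_compose2[OF assms(4) assms(3)] assms(5)
  by (intro continuous_intros) auto

lemma diffeo_comp:
  fixes A B :: "real^'n \<Rightarrow> real^'n"
  assumes A: "diffeo A" and B: "diffeo B"
  shows "diffeo (A \<circ> B)"
proof -
  have "inv (A \<circ> B) = inv B \<circ> inv A"
    using A B by (simp add: diffeo_def o_inv_distrib)
  then show ?thesis
    using A B diffeo_continuous_on[OF A] diffeo_continuous_on[OF B] unfolding diffeo_def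
    by (auto simp: bij_comp intro: differentiable_chain_at
        continuous_on_matrix_frechet_derivative_comp)
qed

lemma diffeo_comp_upto:
  assumes "\<And>l. l \<in> {1..L} \<Longrightarrow> diffeo (Q l)" "l \<le> L"
  shows "diffeo (comp_upto Q l)"
  using assms(2)
proof (induct l)
  case (Suc l)
  then have "diffeo (comp_upto Q l)" "diffeo (Q (Suc l))"
    using assms(1)[of "Suc l"] by auto
  then show ?case
    unfolding comp_upto.simps by (rule diffeo_comp)
qed (simp add: diffeo_id)

lemma pushfwd_comp:
  fixes A B :: "real^'n \<Rightarrow> real^'n"
  assumes A: "diffeo A" and B: "diffeo B"
  shows "pushfwd (A \<circ> B) f = pushfwd A (pushfwd B f)"
proof -
  have inv: "inv (A \<circ> B) = inv B \<circ> inv A"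
    using A B by (simp add: diffeo_def o_inv_distrib)
  have "\<And>x. inv A differentiable at x" "\<And>x. inv B differentiable at x"
    using A B by (simp_all add: diffeo_def)
  then show ?thesis
    unfolding pushfwd_def inv by (simp add: jac_det_comp abs_mult fun_eq_iff mult_ac)
qed

section \<open>Hellinger distance\<close>

lemma abs_mult_le_sum_squares: "\<bar>x * y\<bar> \<le> x\<^sup>2 + (y\<^sup>2 :: real)"
proof -
  have "2 * (\<bar>x\<bar> * \<bar>y\<bar>) \<le> x\<^sup>2 + y\<^sup>2"
    using sum_squares_bound[of "\<bar>x\<bar>" "\<bar>y\<bar>"] by (simp add: mult.assoc)
  moreover have "0 \<le> \<bar>x\<bar> * \<bar>y\<bar>" by simp
  ultimately have "\<bar>x\<bar> * \<bar>y\<bar> \<le> x\<^sup>2 + y\<^sup>2" by linarith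
  then show ?thesis by (simp add: abs_mult)
qed

lemma L2_Cauchy_Schwarz:
  fixes a b :: "'a \<Rightarrow> real"
  assumes [measurable]: "a \<in> borel_measurable M" "b \<in> borel_measurable M"
    and a: "integrable M (\<lambda>x. (a x)\<^sup>2)" and b: "integrable M (\<lambda>x. (b x)\<^sup>2)"
  shows "integrable M (\<lambda>x. a x * b x)"
    and "(\<integral>x. a x * b x \<partial>M) \<le> sqrt (\<integral>x. (a x)\<^sup>2 \<partial>M) * sqrt (\<integral>x. (b x)\<^sup>2 \<partial>M)"
proof -
  let ?A = "\<integral>x. (a x)\<^sup>2 \<partial>M" and ?B = "\<integral>x. (b x)\<^sup>2 \<partial>M" and ?E = "\<integral>x. \<bar>a x * b x\<bar> \<partial>M"
  have abs_ab: "integrable M (\<lambda>x. \<bar>a x * b x\<bar>)"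
  proof (rule Bochner_Integration.integrable_bound)
    show "integrable M (\<lambda>x. (a x)\<^sup>2 + (b x)\<^sup>2)"
      using a b by simp
    show "AE x in M. norm \<bar>a x * b x\<bar> \<le> norm ((a x)\<^sup>2 + (b x)\<^sup>2)"
      using abs_mult_le_sum_squares by simp
  qed measurable
  then show ab: "integrable M (\<lambda>x. a x * b x)"
    by (simp add: integrable_abs_iff)
  have "(\<integral>\<^sup>+x. ennreal \<bar>a x\<bar> * ennreal \<bar>b x\<bar> \<partial>M)\<^sup>2
      \<le> (\<integral>\<^sup>+x. ennreal \<bar>a x\<bar> ^ 2 \<partial>M) * (\<integral>\<^sup>+x. ennreal \<bar>b x\<bar> ^ 2 \<partial>M)"
    by (rule Cauchy_Schwarz_nn_integral) auto
  moreover have "(\<integral>\<^sup>+x. ennreal \<bar>a x\<bar> * ennreal \<bar>b x\<bar> \<partial>M) = ennreal ?E"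
    using nn_integral_eq_integral[OF abs_ab] by (simp add: abs_mult ennreal_mult)
  ultimately have "ennreal (?E\<^sup>2) \<le> ennreal ?A * ennreal ?B"
    using nn_integral_eq_integral[OF a] nn_integral_eq_integral[OF b] by (simp add: ennreal_power)
  then have "?E\<^sup>2 \<le> ?A * ?B"
    by (simp add: ennreal_mult[symmetric])
  then have "?E \<le> sqrt ?A * sqrt ?B"
    unfolding real_sqrt_mult[symmetric] by (rule real_le_rsqrt)
  moreover have "(\<integral>x. a x * b x \<partial>M) \<le> ?E"
    using ab abs_ab by (intro integral_mono) auto
  ultimately show "(\<integral>x. a x * b x \<partial>M) \<le> sqrt ?A * sqrt ?B"
    by linarith
qed

lemma L2_triangle:
  fixes a b :: "'a \<Rightarrow> real"
  assumes [measurable]: "a \<in> borel_measurable M" "b \<in> borel_measurable M"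
    and a: "integrable M (\<lambda>x. (a x)\<^sup>2)" and b: "integrable M (\<lambda>x. (b x)\<^sup>2)"
  shows "sqrt (\<integral>x. (a x + b x)\<^sup>2 \<partial>M) \<le> sqrt (\<integral>x. (a x)\<^sup>2 \<partial>M) + sqrt (\<integral>x. (b x)\<^sup>2 \<partial>M)"
proof -
  let ?A = "\<integral>x. (a x)\<^sup>2 \<partial>M" and ?B = "\<integral>x. (b x)\<^sup>2 \<partial>M"
  note CS = L2_Cauchy_Schwarz[OF assms]
  have "(\<integral>x. (a x + b x)\<^sup>2 \<partial>M) = (\<integral>x. (a x)\<^sup>2 + 2 * (a x * b x) + (b x)\<^sup>2 \<partial>M)"
    by (simp add: power2_sum algebra_simps)
  also have "\<dots> = ?A + 2 * (\<integral>x. a x * b x \<partial>M) + ?B"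
    using a b CS(1) by simp
  also have "\<dots> \<le> (sqrt ?A + sqrt ?B)\<^sup>2"
    using CS(2) by (simp add: power2_sum)
  finally have "sqrt (\<integral>x. (a x + b x)\<^sup>2 \<partial>M) \<le> sqrt ((sqrt ?A + sqrt ?B)\<^sup>2)"
    by (rule real_sqrt_le_mono)
  then show ?thesis
    by simp
qed

lemma hellinger_triangle:
  assumes "integrable lborel f" "integrable lborel g" "integrable lborel h"
    and "\<And>x. 0 \<le> f x" "\<And>x. 0 \<le> g x" "\<And>x. 0 \<le> h x"
  shows "hellinger f h \<le> hellinger f g + hellinger g h"
proof -
  have [measurable]: "f \<in> borel_measurable borel" "g \<in> borel_measurable borel"
    "h \<in> borel_measurable borel"
    using assms(1-3) by (auto dest: borel_measurable_integrable)
  have square_integrable: "integrable lborel (\<lambda>x. (sqrt (u x) - sqrt (v x))\<^sup>2)"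
    if [measurable]: "u \<in> borel_measurable borel" "v \<in> borel_measurable borel"
      and "integrable lborel u" "integrable lborel v" "\<And>x. 0 \<le> u x" "\<And>x. 0 \<le> v x" for u v
  proof (rule Bochner_Integration.integrable_bound)
    show "integrable lborel (\<lambda>x. u x + v x)"
      using that by simp
    have "(sqrt (u x) - sqrt (v x))\<^sup>2 \<le> u x + v x" for x
      using that(5,6)[of x] by (simp add: power2_diff)
    then show "AE x in lborel. norm ((sqrt (u x) - sqrt (v x))\<^sup>2) \<le> norm (u x + v x)"
      using that by simp
  qed measurable
  have "sqrt (\<integral>x. (sqrt (f x) - sqrt (h x))\<^sup>2 \<partial>lborel)
      \<le> sqrt (\<integral>x. (sqrt (f x) - sqrt (g x))\<^sup>2 \<partial>lborel)
        + sqrt (\<integral>x. (sqrt (g x) - sqrt (h x))\<^sup>2 \<partial>lborel)"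
    using L2_triangle[of "\<lambda>x. sqrt (f x) - sqrt (g x)" lborel "\<lambda>x. sqrt (g x) - sqrt (h x)"]
      square_integrable[of f g] square_integrable[of g h] assms by simp
  then have "sqrt (1/2) * sqrt (\<integral>x. (sqrt (f x) - sqrt (h x))\<^sup>2 \<partial>lborel)
      \<le> sqrt (1/2) * sqrt (\<integral>x. (sqrt (f x) - sqrt (g x))\<^sup>2 \<partial>lborel)
        + sqrt (1/2) * sqrt (\<integral>x. (sqrt (g x) - sqrt (h x))\<^sup>2 \<partial>lborel)"
    by (simp add: distrib_left[symmetric])
  then show ?thesis
    by (simp only: hellinger_def real_sqrt_mult)
qed

lemma borel_measurable_pushfwd [measurable]:
  assumes T: "diffeo T" and [measurable]: "f \<in> borel_measurable borel"
  shows "pushfwd T f \<in> borel_measurable borel"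
  using borel_measurable_diffeo[OF T] borel_measurable_jac_det[OF T]
  unfolding pushfwd_def by measurable

lemma borel_measurable_pullback [measurable]:
  assumes T: "diffeo T" and [measurable]: "f \<in> borel_measurable borel"
  shows "pullback T f \<in> borel_measurable borel"
  using borel_measurable_diffeo[OF T] borel_measurable_jac_det[OF T]
  unfolding pullback_def by measurable

lemma pushfwd_nonneg: "(\<And>x. 0 \<le> f x) \<Longrightarrow> 0 \<le> pushfwd T f u"
  by (simp add: pushfwd_def)

lemma nn_integral_pushfwd:
  assumes T: "diffeo T" and [measurable]: "f \<in> borel_measurable borel" and f: "\<And>x. 0 \<le> f x"
  shows "(\<integral>\<^sup>+u. pushfwd T f u \<partial>lborel) = (\<integral>\<^sup>+x. f x \<partial>lborel)"
proof -
  have "(\<integral>\<^sup>+u. pushfwd T f u \<partial>lborel) = (\<integral>\<^sup>+x. \<bar>jac_det T x\<bar> * pushfwd T f (T x) \<partial>lborel)"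
    using T f by (intro nn_integral_change_of_variables_diffeo) (auto intro: pushfwd_nonneg)
  also have "\<dots> = (\<integral>\<^sup>+x. f x \<partial>lborel)"
    using jac_det_inv_mult[OF T] T
    by (intro nn_integral_cong) (simp add: pushfwd_def algebra_simps abs_mult[symmetric])
  finally show ?thesis .
qed

lemma is_density_pushfwd:
  assumes T: "diffeo T" and f: "is_density f"
  shows "is_density (pushfwd T f)"
proof -
  have [measurable]: "f \<in> borel_measurable borel" and f_nonneg: "\<And>x. 0 \<le> f x"
    using f by (simp_all add: is_density_def)
  have "(\<integral>\<^sup>+x. f x \<partial>lborel) = 1"
    using f nn_integral_eq_integral[of lborel f] by (simp add: is_density_def)
  then have nn_integral: "(\<integral>\<^sup>+u. pushfwd T f u \<partial>lborel) = 1"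
    using nn_integral_pushfwd[OF T _ f_nonneg] by simp
  have [measurable]: "pushfwd T f \<in> borel_measurable borel"
    using T by simp
  have nonneg: "\<And>u. 0 \<le> pushfwd T f u"
    using f_nonneg by (rule pushfwd_nonneg)
  have "integrable lborel (pushfwd T f)"
    using nn_integral nonneg by (intro integrableI_nonneg) auto
  moreover have "integral\<^sup>L lborel (pushfwd T f) = 1"
    using nn_integral nonneg by (subst integral_eq_nn_integral) auto
  ultimately show ?thesis
    using nonneg by (simp add: is_density_def)
qed

lemma hellinger_eq_nn_integral:
  assumes [measurable]: "f \<in> borel_measurable borel" "h \<in> borel_measurable borel"
  shows "hellinger f h = sqrt (1/2 * enn2real (\<integral>\<^sup>+x. (sqrt (f x) - sqrt (h x))\<^sup>2 \<partial>lborel))"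
  unfolding hellinger_def by (subst integral_eq_nn_integral) auto

lemma scaled_sqrt_diff_square:
  fixes a b c d :: real
  assumes "0 \<le> a" "0 \<le> b" "0 \<le> c" "0 \<le> d" "c * d = 1"
  shows "d * (sqrt (a * c) - sqrt b)\<^sup>2 = (sqrt a - sqrt (b * d))\<^sup>2"
proof -
  have cd: "sqrt c * sqrt d = 1"
    using assms by (metis real_sqrt_mult real_sqrt_one)
  have "d * (sqrt (a * c) - sqrt b)\<^sup>2 = (sqrt d * (sqrt a * sqrt c - sqrt b))\<^sup>2"
    using assms by (simp add: real_sqrt_mult power_mult_distrib)
  also have "\<dots> = (sqrt a * (sqrt c * sqrt d) - sqrt b * sqrt d)\<^sup>2"
    by (simp add: algebra_simps)
  finally show ?thesis
    by (simp add: cd real_sqrt_mult)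
qed

lemma hellinger_pushfwd_pullback:
  assumes T: "diffeo T" and [measurable]: "g \<in> borel_measurable borel" "f \<in> borel_measurable borel"
    and g: "\<And>x. 0 \<le> g x" and f: "\<And>x. 0 \<le> f x"
  shows "hellinger (pushfwd T g) f = hellinger g (pullback T f)"
proof -
  note [measurable] = borel_measurable_diffeo[OF T] borel_measurable_jac_det[OF T]
  have "(\<integral>\<^sup>+u. (sqrt (pushfwd T g u) - sqrt (f u))\<^sup>2 \<partial>lborel)
      = (\<integral>\<^sup>+x. \<bar>jac_det T x\<bar> * (sqrt (pushfwd T g (T x)) - sqrt (f (T x)))\<^sup>2 \<partial>lborel)"
    using T by (intro nn_integral_change_of_variables_diffeo) auto
  also have "\<dots> = (\<integral>\<^sup>+x. (sqrt (g x) - sqrt (pullback T f x))\<^sup>2 \<partial>lborel)"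
  proof (intro nn_integral_cong)
    fix x
    have "\<bar>jac_det T x\<bar> * (sqrt (g x * \<bar>jac_det (inv T) (T x)\<bar>) - sqrt (f (T x)))\<^sup>2
        = (sqrt (g x) - sqrt (f (T x) * \<bar>jac_det T x\<bar>))\<^sup>2"
      using jac_det_inv_mult[OF T, of x] g f
      by (intro scaled_sqrt_diff_square) (auto simp: abs_mult[symmetric])
    then show "ennreal (\<bar>jac_det T x\<bar> * (sqrt (pushfwd T g (T x)) - sqrt (f (T x)))\<^sup>2)
        = ennreal ((sqrt (g x) - sqrt (pullback T f x))\<^sup>2)"
      using T by (simp add: pushfwd_def pullback_def)
  qed
  finally show ?thesis
    using T by (simp add: hellinger_eq_nn_integral)
qed

lemma hellinger_pushfwd_comp_le:
  assumes T: "diffeo T" and Q: "diffeo Q" and "0 \<le> \<omega>"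
    and fU: "is_density fU" and f: "is_density f" and f': "is_density f'"
    and contraction: "hellinger (pushfwd Q fU) (pullback T f') \<le> \<omega> * hellinger fU (pullback T f')"
  shows "hellinger (pushfwd (T \<circ> Q) fU) f' \<le> \<omega> * (hellinger (pushfwd T fU) f + hellinger f f')"
proof -
  have [measurable]: "fU \<in> borel_measurable borel" "f' \<in> borel_measurable borel"
    and nonneg: "\<And>x. 0 \<le> fU x" "\<And>x. 0 \<le> f' x"
    using fU f' by (simp_all add: is_density_def)
  have "hellinger (pushfwd (T \<circ> Q) fU) f' = hellinger (pushfwd Q fU) (pullback T f')"
    using T Q nonneg pushfwd_nonneg[of fU Q]
    by (simp add: pushfwd_comp hellinger_pushfwd_pullback)
  also have "\<dots> \<le> \<omega> * hellinger fU (pullback T f')"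
    by (fact contraction)
  also have "hellinger fU (pullback T f') = hellinger (pushfwd T fU) f'"
    using T nonneg by (simp add: hellinger_pushfwd_pullback)
  also have "\<omega> * \<dots> \<le> \<omega> * (hellinger (pushfwd T fU) f + hellinger f f')"
    using is_density_pushfwd[OF T fU] f f' \<open>0 \<le> \<omega>\<close>
    by (intro mult_left_mono hellinger_triangle) (simp_all add: is_density_def)
  finally show ?thesis .
qed

lemma contraction_recursion_bound:
  fixes e :: "nat \<Rightarrow> real"
  assumes "0 \<le> \<omega>" "\<omega> < 1" "0 \<le> \<eta>"
    and first: "e 1 \<le> \<omega> * \<eta>"
    and recursion: "\<And>l. 1 \<le> l \<Longrightarrow> l < L \<Longrightarrow> e (l + 1) \<le> \<omega> * (e l + \<eta>)"
    and l: "1 \<le> l" "l \<le> L"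
  shows "e l \<le> \<omega> / (1 - \<omega>) * \<eta>"
  using l
proof (induction l rule: dec_induct)
  case base
  have "\<omega> * \<eta> \<le> \<omega> / (1 - \<omega>) * \<eta>"
    using assms(1-3) by (intro mult_right_mono) (auto simp: field_simps)
  with first show ?case by simp
next
  case (step l)
  have "e (Suc l) \<le> \<omega> * (e l + \<eta>)"
    using recursion[of l] step by simp
  also have "\<dots> \<le> \<omega> * (\<omega> / (1 - \<omega>) * \<eta> + \<eta>)"
    using step assms(1) by (simp add: mult_left_mono)
  also have "\<dots> = \<omega> / (1 - \<omega>) * \<eta>"
    using assms(2) by (simp add: field_simps)
  finally show ?case .
qed

theorem proposition4p1:
  fixes fU :: "real^'n \<Rightarrow> real"
    and fX :: "nat \<Rightarrow> real^'n \<Rightarrow> real"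
    and Q :: "nat \<Rightarrow> real^'n \<Rightarrow> real^'n"
    and L :: nat and \<eta> \<omega> :: real
  assumes L: "L \<ge> 1"
    and dU: "is_density fU"
    and dX: "\<And>l. l \<in> {1..L} \<Longrightarrow> is_density (fX l)"
    and dQ: "\<And>l. l \<in> {1..L} \<Longrightarrow> diffeo (Q l)"
    and eta: "0 < \<eta>" "\<eta> < 1"
    and omega: "0 \<le> \<omega>" "\<omega> < 1"
    and a: "\<And>l. 1 \<le> l \<Longrightarrow> l < L \<Longrightarrow> hellinger (fX l) (fX (l+1)) \<le> \<eta>"
    and b: "\<And>l. 1 \<le> l \<Longrightarrow> l < L \<Longrightarrow>
          hellinger (pushfwd (Q (l+1)) fU) (pullback (comp_upto Q l) (fX (l+1)))
          \<le> \<omega> * hellinger fU (pullback (comp_upto Q l) (fX (l+1)))"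
    and c: "hellinger (pushfwd (Q 1) fU) (fX 1) \<le> \<omega> * \<eta>"
  shows "hellinger (pushfwd (comp_upto Q L) fU) (fX L) \<le> \<omega> / (1 - \<omega>) * \<eta>"
proof -
  define e where "e l = hellinger (pushfwd (comp_upto Q l) fU) (fX l)" for l
  have "e L \<le> \<omega> / (1 - \<omega>) * \<eta>"
  proof (rule contraction_recursion_bound[where L = L])
    fix l
    assume l: "1 \<le> l" "l < L"
    have "e (l + 1) = hellinger (pushfwd (comp_upto Q l \<circ> Q (l + 1)) fU) (fX (l + 1))"
      by (simp add: e_def)
    also have "\<dots> \<le> \<omega> * (e l + hellinger (fX l) (fX (l + 1)))"
      unfolding e_def using l
      by (intro hellinger_pushfwd_comp_le diffeo_comp_upto[OF dQ] dQ dU dX b omega) auto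
    also have "\<dots> \<le> \<omega> * (e l + \<eta>)"
      using a[OF l] omega by (simp add: mult_left_mono)
    finally show "e (l + 1) \<le> \<omega> * (e l + \<eta>)" .
  qed (use L eta omega c in \<open>auto simp: e_def\<close>)
  then show ?thesis
    by (simp add: e_def)
qed

end
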